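(* Let $K$ be a field, $S=K[x_1,\dots,x_n]$, $A\subseteq\{1,\dots,n\}$ and $f=\prod_{j\in A}x_j$. In any Stanley decomposition of $S_f$, the number of Stanley spaces of maximal dimension (among the spaces of that decomposition) is equal to $2^{|A|}$.
   Context: $S_f=K[x_1,\dots,x_n,x_j^{-1}:j\in A]$ with $K$-basis the monomials $x_1^{a_1}\cdots x_n^{a_n}$, $a_j\in\mathbb Z$ for $j\in A$, $a_j\in\mathbb N$ otherwise. A Stanley space of $S_f$ is $uK[Z]$, the $K$-span of the monomials $uw$ ($w$ a monomial in the elements of $Z$), where $u$ is a monomial, $Z\subseteq\{x_1,\dots,x_n\}\cup\{x_j^{-1}:j\in A\}$ with $\{x_j,x_j^{-1}\}\not\subseteq Z$ for all $j\in A$, and $uK[Z]$ is a free $K[Z]$-module; its dimension is $|Z|$. A Stanley decomposition of $S_f$ is an expression of $S_f$ as a finite direct sum (of $K$-vector spaces) of Stanley spaces. *)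

theory Defs
  imports "HOL-Library.Poly_Mapping"
begin

text \<open>Variables x_1..x_n are indexed by 1..n. A Laurent monomial
  x_1^{a_1}...x_n^{a_n} is represented by its exponent vector a :: nat => int
  (zero outside 1..n). Elements of S_f are finitely supported K-linear
  combinations of the monomials of S_f, i.e. elements of
  (nat => int) =>0 'k whose support consists of monomials of S_f.\<close>

definition monomials_Sf :: "nat \<Rightarrow> nat set \<Rightarrow> (nat \<Rightarrow> int) set" where
  "monomials_Sf n A = {a. (\<forall>j. j \<notin> {1..n} \<longrightarrow> a j = 0) \<and> (\<forall>j. j \<notin> A \<longrightarrow> a j \<ge> 0)}"

definition Sf :: "nat \<Rightarrow> nat set \<Rightarrow> ((nat \<Rightarrow> int) \<Rightarrow>\<^sub>0 'k::field) set" where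
  "Sf n A = {p. Poly_Mapping.keys p \<subseteq> monomials_Sf n A}"

text \<open>The generator set Z: (j, True) stands for x_j, (j, False) for x_j^{-1}.\<close>

definition valid_Z :: "nat \<Rightarrow> nat set \<Rightarrow> (nat \<times> bool) set \<Rightarrow> bool" where
  "valid_Z n A Z \<longleftrightarrow> Z \<subseteq> {(j, True) | j. j \<in> {1..n}} \<union> {(j, False) | j. j \<in> A}
     \<and> (\<forall>j. \<not> ((j, True) \<in> Z \<and> (j, False) \<in> Z))"

definition monomials_in :: "(nat \<times> bool) set \<Rightarrow> (nat \<Rightarrow> int) set" where
  "monomials_in Z = {w. \<exists>e :: nat \<times> bool \<Rightarrow> nat. (\<forall>z. z \<notin> Z \<longrightarrow> e z = 0) \<and>
      (\<forall>j. w j = int (e (j, True)) - int (e (j, False)))}"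

text \<open>The K-span uK[Z] of the monomials uw (product of monomials = sum of exponents).\<close>

definition stanley_space :: "(nat \<Rightarrow> int) \<Rightarrow> (nat \<times> bool) set \<Rightarrow> ((nat \<Rightarrow> int) \<Rightarrow>\<^sub>0 'k::field) set" where
  "stanley_space u Z = {p. Poly_Mapping.keys p \<subseteq> (\<lambda>w j. u j + w j) ` monomials_in Z}"

text \<open>(u, Z) describes a Stanley space of S_f: u monomial of S_f, Z valid, and
  uK[Z] free over K[Z] (for a monomial space: w \<mapsto> uw injective).\<close>

definition is_stanley_space :: "nat \<Rightarrow> nat set \<Rightarrow> (nat \<Rightarrow> int) \<times> (nat \<times> bool) set \<Rightarrow> bool" where
  "is_stanley_space n A uZ \<longleftrightarrow> fst uZ \<in> monomials_Sf n A \<and> valid_Z n A (snd uZ)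
     \<and> inj_on (\<lambda>w j. fst uZ j + w j) (monomials_in (snd uZ))"

definition stanley_dim :: "(nat \<Rightarrow> int) \<times> (nat \<times> bool) set \<Rightarrow> nat" where
  "stanley_dim uZ = card (snd uZ)"

text \<open>A Stanley decomposition: a finite family (list) of Stanley spaces such that S_f
  is their direct sum as K-vector spaces (unique decomposition of every element).\<close>

definition stanley_decomposition ::
  "'k::field itself \<Rightarrow> nat \<Rightarrow> nat set \<Rightarrow> ((nat \<Rightarrow> int) \<times> (nat \<times> bool) set) list \<Rightarrow> bool" where
  "stanley_decomposition _ n A D \<longleftrightarrow>
     (\<forall>i < length D. is_stanley_space n A (D ! i)) \<and>
     (\<forall>i < length D. (stanley_space (fst (D ! i)) (snd (D ! i)) :: ((nat \<Rightarrow> int) \<Rightarrow>\<^sub>0 'k) set) \<subseteq> Sf n A) \<and>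
     (\<forall>p \<in> (Sf n A :: ((nat \<Rightarrow> int) \<Rightarrow>\<^sub>0 'k) set).
        \<exists>!ps. length ps = length D \<and>
              (\<forall>i < length D. ps ! i \<in> stanley_space (fst (D ! i)) (snd (D ! i))) \<and>
              p = sum_list ps)"

end

theory Submission
  imports Defs
begin

text \<open>The exponents of the monomials of a Stanley space uK[Z] form a translated orthant
  (the cone of u and Z), and the space consists of the polynomials supported on it, so a
  Stanley decomposition partitions the exponents of S_f into such cones. A space has the
  largest possible dimension n exactly when Z contains x_j or x_j^{-1} for every j; such
  generator sets correspond to the subsets S of A of inverted variables. Each of these
  2^|A| sets is the generator set of exactly one cone of the partition: an exponent vector
  far out in its orthant can only be covered by a cone with these generators, and two
  cones with the same n generators always meet (take componentwise maxima and minima of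
  their apexes).\<close>

definition stanley_cone :: "(nat \<Rightarrow> int) \<Rightarrow> (nat \<times> bool) set \<Rightarrow> (nat \<Rightarrow> int) set" where
  "stanley_cone u Z = (\<lambda>w j. u j + w j) ` monomials_in Z"

definition orthant_gens :: "nat \<Rightarrow> nat set \<Rightarrow> (nat \<times> bool) set" where
  "orthant_gens n S = (\<lambda>j. (j, True)) ` ({1..n} - S) \<union> (\<lambda>j. (j, False)) ` S"

lemma stanley_space_eq: "stanley_space u Z = {p. Poly_Mapping.keys p \<subseteq> stanley_cone u Z}"
  unfolding stanley_space_def stanley_cone_def ..

lemma mem_monomials_in_iff:
  assumes no_pair: "\<forall>j. \<not> ((j, True) \<in> Z \<and> (j, False) \<in> Z)"
  shows "w \<in> monomials_in Z \<longleftrightarrow>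
    (\<forall>j. if (j, True) \<in> Z then 0 \<le> w j else if (j, False) \<in> Z then w j \<le> 0 else w j = 0)"
    (is "_ \<longleftrightarrow> (\<forall>j. ?sign j)")
proof
  assume "w \<in> monomials_in Z"
  then obtain e :: "nat \<times> bool \<Rightarrow> nat" where e0: "\<forall>z. z \<notin> Z \<longrightarrow> e z = 0"
    and we: "\<forall>j. w j = int (e (j, True)) - int (e (j, False))"
    unfolding monomials_in_def by auto
  show "\<forall>j. ?sign j"
  proof
    fix j
    have "e (j, True) = 0 \<or> e (j, False) = 0" using no_pair e0 by metis
    then show "?sign j" using no_pair[rule_format, of j] e0 we[rule_format, of j] by auto
  qed
next
  assume sign: "\<forall>j. ?sign j"
  define e :: "nat \<times> bool \<Rightarrow> nat" where
    "e = (\<lambda>(j, t). if (j, t) \<in> Z then nat (if t then w j else - w j) else 0)"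
  show "w \<in> monomials_in Z"
    unfolding monomials_in_def
  proof (intro CollectI exI[of _ e] conjI allI impI)
    fix z assume "z \<notin> Z"
    then show "e z = 0" unfolding e_def by (cases z) auto
  next
    fix j
    have "?sign j" using sign ..
    then show "w j = int (e (j, True)) - int (e (j, False))"
      using no_pair unfolding e_def by (cases "(j, True) \<in> Z"; cases "(j, False) \<in> Z") auto
  qed
qed

lemma mem_stanley_cone_iff:
  assumes "\<forall>j. \<not> ((j, True) \<in> Z \<and> (j, False) \<in> Z)"
  shows "b \<in> stanley_cone u Z \<longleftrightarrow>
    (\<forall>j. if (j, True) \<in> Z then u j \<le> b j else if (j, False) \<in> Z then b j \<le> u j else b j = u j)"
proof -
  have "b \<in> stanley_cone u Z \<longleftrightarrow> (\<lambda>j. b j - u j) \<in> monomials_in Z"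
  proof
    assume "b \<in> stanley_cone u Z"
    then obtain w where "w \<in> monomials_in Z" "b = (\<lambda>j. u j + w j)"
      unfolding stanley_cone_def by blast
    then show "(\<lambda>j. b j - u j) \<in> monomials_in Z" by simp
  next
    assume "(\<lambda>j. b j - u j) \<in> monomials_in Z"
    then show "b \<in> stanley_cone u Z"
      unfolding stanley_cone_def by (intro rev_image_eqI) auto
  qed
  also have "\<dots> \<longleftrightarrow>
    (\<forall>j. if (j, True) \<in> Z then u j \<le> b j else if (j, False) \<in> Z then b j \<le> u j else b j = u j)"
    unfolding mem_monomials_in_iff[OF assms] by simp
  finally show ?thesis .
qed

lemma orthant_gens_simps [simp]:
  "(j, True) \<in> orthant_gens n S \<longleftrightarrow> j \<in> {1..n} - S"
  "(j, False) \<in> orthant_gens n S \<longleftrightarrow> j \<in> S"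
  unfolding orthant_gens_def by auto

lemma mem_stanley_cone_orthant_gens_iff:
  assumes "S \<subseteq> {1..n}"
  shows "b \<in> stanley_cone u (orthant_gens n S) \<longleftrightarrow>
    (\<forall>j. (j \<in> {1..n} - S \<longrightarrow> u j \<le> b j) \<and> (j \<in> S \<longrightarrow> b j \<le> u j)
       \<and> (j \<notin> {1..n} \<longrightarrow> b j = u j))"
proof -
  have no_pair: "\<forall>j. \<not> ((j, True) \<in> orthant_gens n S \<and> (j, False) \<in> orthant_gens n S)"
    by simp
  show ?thesis
    unfolding mem_stanley_cone_iff[OF no_pair] using assms by (intro all_cong1) auto
qed

lemma valid_Z_no_pair: "valid_Z n A Z \<Longrightarrow> \<not> ((j, True) \<in> Z \<and> (j, False) \<in> Z)"
  unfolding valid_Z_def by blast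

lemma valid_Z_fst_subset: "valid_Z n A Z \<Longrightarrow> A \<subseteq> {1..n} \<Longrightarrow> fst ` Z \<subseteq> {1..n}"
  unfolding valid_Z_def by force

lemma valid_Z_inj_on_fst: "valid_Z n A Z \<Longrightarrow> inj_on fst Z"
  by (rule inj_onI) (metis (full_types) prod.collapse valid_Z_no_pair)

lemma valid_Z_finite_card_le:
  assumes "valid_Z n A Z" "A \<subseteq> {1..n}"
  shows "finite Z" "card Z \<le> n"
proof -
  have inj: "inj_on fst Z" and sub: "fst ` Z \<subseteq> {1..n}"
    using assms valid_Z_inj_on_fst valid_Z_fst_subset by blast+
  show "finite Z" using finite_imageD[OF finite_subset[OF sub] inj] by simp
  show "card Z \<le> n" using card_mono[OF _ sub] card_image[OF inj] by simp
qed

lemma card_orthant_gens: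
  assumes "S \<subseteq> {1..n}"
  shows "card (orthant_gens n S) = n"
proof -
  have "finite S" using assms finite_subset by blast
  have "card (orthant_gens n S) = card ({1..n} - S) + card S"
    unfolding orthant_gens_def using \<open>finite S\<close>
    by (subst card_Un_disjoint) (auto simp: card_image inj_on_def)
  also have "\<dots> = n"
    using assms \<open>finite S\<close> card_mono[OF _ assms] by (simp add: card_Diff_subset)
  finally show ?thesis .
qed

lemma inj_orthant_gens: "inj (orthant_gens n)"
proof (rule injI)
  fix S T assume "orthant_gens n S = orthant_gens n T"
  then have "{j. (j, False) \<in> orthant_gens n S} = {j. (j, False) \<in> orthant_gens n T}" by simp
  then show "S = T" by simp
qed

lemma valid_Z_card_eq_iff:
  assumes "A \<subseteq> {1..n}"
  shows "valid_Z n A Z \<and> card Z = n \<longleftrightarrow> (\<exists>S \<subseteq> A. Z = orthant_gens n S)"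
proof
  assume Z: "valid_Z n A Z \<and> card Z = n"
  have sub: "fst ` Z \<subseteq> {1..n}" using Z assms valid_Z_fst_subset by blast
  have "card (fst ` Z) = n" using Z card_image[OF valid_Z_inj_on_fst[of n A Z]] by simp
  then have fst_Z: "fst ` Z = {1..n}" using card_subset_eq[OF finite_atLeastAtMost sub] by simp
  define S where "S = {j. (j, False) \<in> Z}"
  have "S \<subseteq> A" using Z unfolding S_def valid_Z_def by auto
  moreover have gens_True: "(j, True) \<in> Z \<longleftrightarrow> j \<in> {1..n} - S" for j
  proof
    assume "(j, True) \<in> Z"
    then show "j \<in> {1..n} - S"
      using fst_Z Z valid_Z_no_pair unfolding S_def by force
  next
    assume j: "j \<in> {1..n} - S"
    then obtain t where "(j, t) \<in> Z" using fst_Z by force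
    then show "(j, True) \<in> Z" using j unfolding S_def by (cases t) auto
  qed
  have "Z = orthant_gens n S"
  proof (rule set_eqI)
    fix z :: "nat \<times> bool"
    obtain j t where "z = (j, t)" by fastforce
    then show "z \<in> Z \<longleftrightarrow> z \<in> orthant_gens n S"
      using gens_True[of j] by (cases t) (auto simp: S_def)
  qed
  ultimately show "\<exists>S \<subseteq> A. Z = orthant_gens n S" by blast
next
  assume "\<exists>S \<subseteq> A. Z = orthant_gens n S"
  then obtain S where "S \<subseteq> A" "Z = orthant_gens n S" by blast
  then show "valid_Z n A Z \<and> card Z = n"
    using assms card_orthant_gens[of S n] unfolding valid_Z_def orthant_gens_def by auto
qed

lemma sum_list_replicate_zero_update:
  assumes "i < m"
  shows "sum_list ((replicate m (0::'a::monoid_add))[i := x]) = x"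
proof -
  have "sum_list (replicate l (0::'a)) = 0" for l by (induction l) simp_all
  then show ?thesis using assms by (induction m arbitrary: i) (auto split: nat.splits)
qed

lemma direct_sum_summands_disjoint:
  fixes V :: "nat \<Rightarrow> 'a::monoid_add set"
  assumes uniq: "\<exists>!ps. length ps = m \<and> (\<forall>l<m. ps ! l \<in> V l) \<and> p = sum_list ps"
    and zero: "\<forall>l<m. 0 \<in> V l"
    and "i < m" "k < m" "p \<in> V i" "p \<in> V k" "i \<noteq> k"
  shows "p = 0"
proof -
  let ?at = "\<lambda>l. (replicate m 0)[l := p]"
  have at: "length (?at l) = m \<and> (\<forall>l'<m. ?at l ! l' \<in> V l') \<and> p = sum_list (?at l)"
    if "l < m" "p \<in> V l" for l
    using that zero by (auto simp: nth_list_update sum_list_replicate_zero_update)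
  have "?at i = ?at k" using uniq at[of i] at[of k] assms(3-6) by blast
  then have "?at i ! i = ?at k ! i" by simp
  then show "p = 0" using assms by simp
qed

lemma keys_sum_list_subset:
  "Poly_Mapping.keys (sum_list ps) \<subseteq> (\<Union>q\<in>set ps. Poly_Mapping.keys q)"
proof (induction ps)
  case (Cons q ps)
  then show ?case using keys_add[of q "sum_list ps"] by auto
qed simp

lemma stanley_decompositionD:
  fixes D :: "((nat \<Rightarrow> int) \<times> (nat \<times> bool) set) list"
  assumes "stanley_decomposition TYPE('k::field) n A D"
  shows "i < length D \<Longrightarrow> is_stanley_space n A (D ! i)"
    and "i < length D \<Longrightarrow>
      (stanley_space (fst (D ! i)) (snd (D ! i)) :: ((nat \<Rightarrow> int) \<Rightarrow>\<^sub>0 'k) set) \<subseteq> Sf n A"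
    and "p \<in> (Sf n A :: ((nat \<Rightarrow> int) \<Rightarrow>\<^sub>0 'k) set) \<Longrightarrow>
      \<exists>!ps. length ps = length D \<and>
        (\<forall>i<length D. ps ! i \<in> stanley_space (fst (D ! i)) (snd (D ! i))) \<and> p = sum_list ps"
  using assms unfolding stanley_decomposition_def by blast+

lemma stanley_decomposition_valid_Z:
  "stanley_decomposition TYPE('k::field) n A D \<Longrightarrow> i < length D \<Longrightarrow> valid_Z n A (snd (D ! i))"
  using stanley_decompositionD(1) unfolding is_stanley_space_def by blast

lemma stanley_decomposition_covers:
  assumes dec: "stanley_decomposition TYPE('k::field) n A D" and a: "a \<in> monomials_Sf n A"
  shows "\<exists>i<length D. a \<in> stanley_cone (fst (D ! i)) (snd (D ! i))"
proof -
  have "Poly_Mapping.single a (1::'k) \<in> Sf n A" using a unfolding Sf_def by simp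
  then have "\<exists>ps. length ps = length D \<and>
      (\<forall>i<length D. ps ! i \<in> stanley_space (fst (D ! i)) (snd (D ! i))) \<and>
      Poly_Mapping.single a (1::'k) = sum_list ps"
    by (rule ex1_implies_ex[OF stanley_decompositionD(3)[OF dec]])
  then obtain ps where len: "length ps = length D"
    and ps: "\<forall>i<length D. ps ! i \<in> stanley_space (fst (D ! i)) (snd (D ! i))"
    and sum: "Poly_Mapping.single a (1::'k) = sum_list ps"
    by blast
  have "a \<in> Poly_Mapping.keys (sum_list ps)" unfolding sum[symmetric] by simp
  then have "a \<in> (\<Union>q\<in>set ps. Poly_Mapping.keys q)" by (rule subsetD[OF keys_sum_list_subset])
  then obtain q where "q \<in> set ps" "a \<in> Poly_Mapping.keys q" by blast
  then obtain i where i: "i < length D" "a \<in> Poly_Mapping.keys (ps ! i)"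
    using len by (auto simp: in_set_conv_nth)
  then have "ps ! i \<in> stanley_space (fst (D ! i)) (snd (D ! i))" using ps by simp
  then show ?thesis using i unfolding stanley_space_eq by blast
qed

lemma stanley_decomposition_cones_disjoint:
  assumes dec: "stanley_decomposition TYPE('k::field) n A D"
    and "i < length D" "k < length D"
    and "a \<in> stanley_cone (fst (D ! i)) (snd (D ! i))" "a \<in> stanley_cone (fst (D ! k)) (snd (D ! k))"
  shows "i = k"
proof (rule ccontr)
  assume "i \<noteq> k"
  let ?V = "\<lambda>l. stanley_space (fst (D ! l)) (snd (D ! l)) :: ((nat \<Rightarrow> int) \<Rightarrow>\<^sub>0 'k) set"
  let ?p = "Poly_Mapping.single a (1::'k)"
  have "?p \<in> ?V i" "?p \<in> ?V k" using assms(4,5) unfolding stanley_space_eq by simp_all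
  moreover have "?p \<in> Sf n A" using stanley_decompositionD(2)[OF dec assms(2)] \<open>?p \<in> ?V i\<close> ..
  then have "\<exists>!ps. length ps = length D \<and> (\<forall>l<length D. ps ! l \<in> ?V l) \<and> ?p = sum_list ps"
    by (rule stanley_decompositionD(3)[OF dec])
  moreover have "\<forall>l<length D. 0 \<in> ?V l" unfolding stanley_space_eq by simp
  ultimately have "?p = 0"
    using direct_sum_summands_disjoint[of "length D" ?V ?p i k] assms(2,3) \<open>i \<noteq> k\<close> by blast
  then show False by (metis lookup_single_eq lookup_zero one_neq_zero)
qed

lemma stanley_decomposition_has_orthant_space:
  assumes dec: "stanley_decomposition TYPE('k::field) n A D"
    and A: "A \<subseteq> {1..n}" and S: "S \<subseteq> A"
  shows "\<exists>i<length D. snd (D ! i) = orthant_gens n S"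
proof -
  define B where "B = insert 0 ((\<lambda>(i, j). \<bar>fst (D ! i) j\<bar>) ` ({..<length D} \<times> {1..n}))"
  define M where "M = 1 + Max B"
  have "finite B" unfolding B_def by simp
  have M: "\<bar>fst (D ! i) j\<bar> < M" if "i < length D" "j \<in> {1..n}" for i j
  proof -
    have "\<bar>fst (D ! i) j\<bar> \<in> B" using that unfolding B_def by force
    then show ?thesis using Max_ge[OF \<open>finite B\<close>] unfolding M_def by fastforce
  qed
  have "0 \<le> Max B" using Max_ge[OF \<open>finite B\<close>] unfolding B_def by blast
  then have "0 < M" unfolding M_def by simp
  \<comment> \<open>an exponent vector deep inside the orthant of \<open>orthant_gens n S\<close>\<close>
  define b where "b j = (if j \<in> {1..n} - S then M else if j \<in> S then - M else 0)" for j
  have "b \<in> monomials_Sf n A"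
    using A S \<open>0 < M\<close> unfolding monomials_Sf_def b_def by auto
  then obtain i where i: "i < length D" and b: "b \<in> stanley_cone (fst (D ! i)) (snd (D ! i))"
    using stanley_decomposition_covers[OF dec] by blast
  have valid: "valid_Z n A (snd (D ! i))" using stanley_decomposition_valid_Z[OF dec i] .
  note b_iff = b[unfolded mem_stanley_cone_iff[OF allI[OF valid_Z_no_pair[OF valid]]], rule_format]
  have "orthant_gens n S \<subseteq> snd (D ! i)"
  proof (rule subsetI)
    fix z assume z: "z \<in> orthant_gens n S"
    obtain j t where zjt: "z = (j, t)" by fastforce
    show "z \<in> snd (D ! i)"
    proof (cases t)
      case True
      then have j: "j \<in> {1..n} - S" using z zjt by simp
      then have "b j = M" unfolding b_def by simp
      then show ?thesis using b_iff[of j] M[OF i, of j] j True zjt by (auto split: if_splits)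
    next
      case False
      then have j: "j \<in> S" using z zjt by simp
      then have "b j = - M" unfolding b_def by simp
      moreover have "j \<in> {1..n}" using j S A by blast
      ultimately show ?thesis using b_iff[of j] M[OF i, of j] False zjt by (auto split: if_splits)
    qed
  qed
  moreover have "card (snd (D ! i)) \<le> card (orthant_gens n S)" "finite (snd (D ! i))"
    using valid_Z_finite_card_le[OF valid A] card_orthant_gens S A by auto
  ultimately have "orthant_gens n S = snd (D ! i)" by (rule card_seteq[rotated])
  then show ?thesis using i by auto
qed

lemma stanley_decomposition_orthant_space_unique:
  assumes dec: "stanley_decomposition TYPE('k::field) n A D"
    and S: "S \<subseteq> {1..n}" and "i < length D" "k < length D"
    and "snd (D ! i) = orthant_gens n S" "snd (D ! k) = orthant_gens n S"
  shows "i = k"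
proof -
  define u where "u = fst (D ! i)"
  define v where "v = fst (D ! k)"
  have "u \<in> monomials_Sf n A" "v \<in> monomials_Sf n A"
    using stanley_decompositionD(1)[OF dec] assms(3,4)
    unfolding is_stanley_space_def u_def v_def by auto
  then have outside: "u j = 0" "v j = 0" if "j \<notin> {1..n}" for j
    using that unfolding monomials_Sf_def by auto
  \<comment> \<open>the two cones meet in the componentwise supremum of their apexes in the orthant order\<close>
  define b where "b j = (if j \<in> S then min (u j) (v j) else max (u j) (v j))" for j
  have "b \<in> stanley_cone u (orthant_gens n S)" "b \<in> stanley_cone v (orthant_gens n S)"
    unfolding mem_stanley_cone_orthant_gens_iff[OF S] b_def using outside by auto
  then show "i = k"
    using stanley_decomposition_cones_disjoint[OF dec assms(3,4)] assms(5,6)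
    unfolding u_def v_def by simp
qed

lemma bij_betw_stanley_decomposition_full_spaces:
  assumes A: "A \<subseteq> {1..n}" and dec: "stanley_decomposition TYPE('k::field) n A D"
  shows "bij_betw (\<lambda>i. snd (D ! i)) {i. i < length D \<and> stanley_dim (D ! i) = n}
    (orthant_gens n ` Pow A)"
proof -
  define I where "I = {i. i < length D \<and> stanley_dim (D ! i) = n}"
  have I_iff: "i \<in> I \<longleftrightarrow> i < length D \<and> (\<exists>S \<subseteq> A. snd (D ! i) = orthant_gens n S)" for i
    using stanley_decomposition_valid_Z[OF dec, of i] valid_Z_card_eq_iff[OF A, of "snd (D ! i)"]
    unfolding I_def stanley_dim_def by auto
  have "inj_on (\<lambda>i. snd (D ! i)) I"
  proof (rule inj_onI)
    fix i k assume "i \<in> I" "k \<in> I" and eq: "snd (D ! i) = snd (D ! k)"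
    then obtain S where "S \<subseteq> A" "snd (D ! i) = orthant_gens n S" "i < length D" "k < length D"
      unfolding I_iff by blast
    then show "i = k"
      using stanley_decomposition_orthant_space_unique[OF dec, of S] eq A by auto
  qed
  moreover have "orthant_gens n S \<in> (\<lambda>i. snd (D ! i)) ` I" if S: "S \<subseteq> A" for S
  proof -
    obtain i where "i < length D" "snd (D ! i) = orthant_gens n S"
      using stanley_decomposition_has_orthant_space[OF dec A S] by blast
    then show ?thesis using S I_iff by (intro rev_image_eqI) auto
  qed
  then have "(\<lambda>i. snd (D ! i)) ` I = orthant_gens n ` Pow A" using I_iff by auto
  ultimately show ?thesis unfolding I_def by (rule bij_betw_imageI)
qed

lemma stanley_decomposition_max_dim:
  assumes A: "A \<subseteq> {1..n}" and dec: "stanley_decomposition TYPE('k::field) n A D"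
  shows "Max {stanley_dim (D ! k) | k. k < length D} = n"
proof -
  obtain i0 where "i0 < length D" "snd (D ! i0) = orthant_gens n {}"
    using stanley_decomposition_has_orthant_space[OF dec A] by blast
  then show ?thesis
    using valid_Z_finite_card_le(2)[OF stanley_decomposition_valid_Z[OF dec] A]
      card_orthant_gens[of "{}" n]
    unfolding stanley_dim_def by (intro Max_eqI) (auto intro!: exI[of _ i0])
qed

theorem corollary6p6:
  fixes n :: nat and A :: "nat set"
    and D :: "((nat \<Rightarrow> int) \<times> (nat \<times> bool) set) list"
  assumes "A \<subseteq> {1..n}"
    and "stanley_decomposition TYPE('k::field) n A D"
  shows "card {i. i < length D \<and>
            stanley_dim (D ! i) = Max {stanley_dim (D ! k) | k. k < length D}} = 2 ^ card A"
proof -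
  have "finite A" using assms(1) finite_subset by blast
  have "card {i. i < length D \<and> stanley_dim (D ! i) = n} = card (orthant_gens n ` Pow A)"
    using bij_betw_stanley_decomposition_full_spaces[OF assms] by (rule bij_betw_same_card)
  also have "\<dots> = card (Pow A)" by (rule card_image[OF inj_on_subset[OF inj_orthant_gens]]) simp
  also have "\<dots> = 2 ^ card A" using \<open>finite A\<close> by (rule card_Pow)
  finally show ?thesis unfolding stanley_decomposition_max_dim[OF assms] .
qed

end
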